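(* Let $K\ge 2$, let $\mathcal{X}$ be an instance space, let $\mathcal{D}$ be a joint distribution of $(X,Y)$ on $\mathcal{X}\times[K]$ and $\overline{\mathcal{D}}$ a joint distribution of $(X,\overline{Y})$ on $\mathcal{X}\times[K]$ with the same marginal of $X$, such that $\mathbb{P}(\overline{Y}=\cdot\mid X=x)=\mathbf{T}\,\mathbb{P}(Y=\cdot\mid X=x)$ for all $x$, where $\mathbf{T}$ has $0$ on the diagonal and $\frac{1}{K-1}$ off the diagonal. Let $\mathbf{g}:\mathcal{X}\to\mathbb{R}^K$ be a decision function and $s:\mathbb{R}\to\mathbb{R}_+$ a binary loss with $s(z)+s(-z)=1$ for all $z$. Consider either (OVA) $\ell(k,\mathbf{g}(x))=s(\mathbf{g}_k(x))+\frac{1}{K-1}\sum_{k'\neq k}s(-\mathbf{g}_{k'}(x))$ and $\overline{\ell}_{c}(\overline{k},\mathbf{g}(x))=\frac{1}{K-1}\sum_{k\neq\overline{k}}s(\mathbf{g}_k(x))+s(-\mathbf{g}_{\overline{k}}(x))$; or (PC) $\ell(k,\mathbf{g}(x))=\sum_{k'\neq k}s(\mathbf{g}_k(x)-\mathbf{g}_{k'}(x))$ and $\overline{\ell}_{c}(\overline{k},\mathbf{g}(x))=\sum_{k'\neq\overline{k}}s(\mathbf{g}_{k'}(x)-\mathbf{g}_{\overline{k}}(x))$. Let $\overline{\ell}(k,\mathbf{g}(x))=-(K-1)\ell(k,\mathbf{g}(x))+\sum_{j=1}^K\ell(j,\mathbf{g}(x))$ and $\overline{R}(\mathbf{g};\overline{\ell})=\mathbb{E}_{(X,\overline{Y})\sim\overline{\mathcal{D}}}[\overline{\ell}(\overline{Y},\mathbf{g}(X))]$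 (which equals the classification risk $\mathbb{E}_{\mathcal{D}}[\ell(Y,\mathbf{g}(X))]$). Then there are non-negative constants $M_1,M_2$ with $\sum_{\overline{y}=1}^K\overline{\ell}_{c}(\overline{y},\mathbf{g}(x))=M_1$ for all $x$ and $\overline{\ell}_{c}(\overline{y},\mathbf{g}(x))+\ell(\overline{y},\mathbf{g}(x))=M_2$ for all $x,\overline{y}$, and $$\overline{R}(\mathbf{g};\overline{\ell})=(K-1)\,\mathbb{E}_{(X,\overline{Y})\sim\overline{\mathcal{D}}}\big[\overline{\ell}_{c}(\overline{Y},\mathbf{g}(X))\big]-M_1+M_2.$$
   Context: $\mathbf{g}_k(x)$ denotes the $k$-th coordinate of $\mathbf{g}(x)$. The losses labelled OVA and PC are the one-versus-all and pairwise-comparison multi-class losses; $\overline{\ell}_c$ denotes their complementary-label versions (the paper writes these also as $\overline{\ell}$, with the same symbol as the loss built from $\ell$; here they are distinguished by the subscript $c$). *)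

theory Defs
  imports "HOL-Probability.Probability"
begin

text \<open>Labels are [K] = {1..K}; a score vector g(x) in R^K is a function nat => real
  whose coordinates 1..K are used.\<close>

definition trans_T :: "nat \<Rightarrow> nat \<Rightarrow> nat \<Rightarrow> real" where
  "trans_T K i j = (if i = j then 0 else 1 / (real K - 1))"

definition ova_loss :: "(real \<Rightarrow> real) \<Rightarrow> nat \<Rightarrow> nat \<Rightarrow> (nat \<Rightarrow> real) \<Rightarrow> real" where
  "ova_loss s K k z = s (z k) + 1 / (real K - 1) * (\<Sum>k'\<in>{1..K} - {k}. s (- z k'))"

definition ova_cl :: "(real \<Rightarrow> real) \<Rightarrow> nat \<Rightarrow> nat \<Rightarrow> (nat \<Rightarrow> real) \<Rightarrow> real" where
  "ova_cl s K kb z = 1 / (real K - 1) * (\<Sum>k\<in>{1..K} - {kb}. s (z k)) + s (- z kb)"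

definition pc_loss :: "(real \<Rightarrow> real) \<Rightarrow> nat \<Rightarrow> nat \<Rightarrow> (nat \<Rightarrow> real) \<Rightarrow> real" where
  "pc_loss s K k z = (\<Sum>k'\<in>{1..K} - {k}. s (z k - z k'))"

definition pc_cl :: "(real \<Rightarrow> real) \<Rightarrow> nat \<Rightarrow> nat \<Rightarrow> (nat \<Rightarrow> real) \<Rightarrow> real" where
  "pc_cl s K kb z = (\<Sum>k'\<in>{1..K} - {kb}. s (z k' - z kb))"

definition comp_loss :: "(nat \<Rightarrow> (nat \<Rightarrow> real) \<Rightarrow> real) \<Rightarrow> nat \<Rightarrow> nat \<Rightarrow> (nat \<Rightarrow> real) \<Rightarrow> real" where
  "comp_loss l K k z = - (real K - 1) * l k z + (\<Sum>j=1..K. l j z)"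

text \<open>Expectation over a joint distribution of (X, label) on X x [K], given by the
  marginal mu of X and the conditional label probabilities eta x k = P(label = k | X = x).\<close>
definition joint_exp :: "'x measure \<Rightarrow> ('x \<Rightarrow> nat \<Rightarrow> real) \<Rightarrow> nat \<Rightarrow> ('x \<Rightarrow> nat \<Rightarrow> real) \<Rightarrow> real" where
  "joint_exp \<mu> eta K f = (\<integral>x. (\<Sum>k=1..K. eta x k * f x k) \<partial>\<mu>)"

end

theory Submission
  imports Defs
begin

text \<open>For both loss families the symmetry s z + s (-z) = 1 makes lc k z + l k z a constant M2
  and the sum of lc over all labels a constant M1. Hence pointwise
  -(K - 1) l k + (\<Sum>j. l j) = (K - 1) lc k - M1 + M2, and since the complementary label
  probabilities sum to 1 (the columns of T sum to 1), this affine relation passes to expectations.\<close>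

lemma sum_atLeastAtMost_remove:
  fixes f :: "nat \<Rightarrow> 'a::ab_group_add"
  assumes "k \<in> {1..K}"
  shows "(\<Sum>j\<in>{1..K} - {k}. f j) = (\<Sum>j=1..K. f j) - f k"
  using assms by (simp add: sum_diff1)

lemma ova_cl_add_ova_loss:
  assumes K: "K \<ge> 2" and s_sym: "\<And>z. s z + s (- z) = 1" and k: "k \<in> {1..K}"
  shows "ova_cl s K k z + ova_loss s K k z = 2"
proof -
  have card: "card ({1..K} - {k}) = K - 1" using k by simp
  have "ova_cl s K k z + ova_loss s K k z =
      1 / (real K - 1) * (\<Sum>j\<in>{1..K} - {k}. s (z j) + s (- z j)) + (s (z k) + s (- z k))"
    unfolding ova_cl_def ova_loss_def by (simp add: sum.distrib algebra_simps)
  also have "\<dots> = 1 / (real K - 1) * (real K - 1) + 1"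
    using s_sym card K by (simp add: of_nat_diff)
  also have "\<dots> = 2" using K by simp
  finally show ?thesis .
qed

lemma sum_ova_cl:
  assumes K: "K \<ge> 2" and s_sym: "\<And>z. s z + s (- z) = 1"
  shows "(\<Sum>k=1..K. ova_cl s K k z) = real K"
proof -
  define S where "S = (\<Sum>j=1..K. s (z j))"
  have "(\<Sum>k=1..K. ova_cl s K k z) = (\<Sum>k=1..K. 1 / (real K - 1) * (S - s (z k)) + s (- z k))"
  proof (rule sum.cong)
    fix k assume "k \<in> {1..K}"
    then show "ova_cl s K k z = 1 / (real K - 1) * (S - s (z k)) + s (- z k)"
      unfolding ova_cl_def S_def by (simp only: sum_atLeastAtMost_remove)
  qed simp
  also have "\<dots> = 1 / (real K - 1) * (\<Sum>k=1..K. S - s (z k)) + (\<Sum>k=1..K. s (- z k))"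
    by (simp add: sum.distrib sum_distrib_left)
  also have "\<dots> = 1 / (real K - 1) * ((real K - 1) * S) + (\<Sum>k=1..K. s (- z k))"
    by (simp add: sum_subtractf S_def algebra_simps)
  also have "\<dots> = (\<Sum>k=1..K. s (z k) + s (- z k))"
    using K by (simp add: S_def sum.distrib)
  also have "\<dots> = real K" using s_sym by simp
  finally show ?thesis .
qed

lemma pc_cl_add_pc_loss:
  assumes s_sym: "\<And>z. s z + s (- z) = 1" and k: "k \<in> {1..K}"
  shows "pc_cl s K k z + pc_loss s K k z = real K - 1"
proof -
  have card: "card ({1..K} - {k}) = K - 1" using k by simp
  have s_antisym: "s (a - b) + s (b - a) = 1" for a b using s_sym[of "a - b"] by simp
  have "pc_cl s K k z + pc_loss s K k z = (\<Sum>j\<in>{1..K} - {k}. s (z j - z k) + s (- (z j - z k)))"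
    unfolding pc_cl_def pc_loss_def by (simp add: sum.distrib)
  also have "\<dots> = real K - 1" using s_antisym card k by (simp add: of_nat_diff)
  finally show ?thesis .
qed

lemma sum_pc_cl:
  assumes s_sym: "\<And>z. s z + s (- z) = 1"
  shows "(\<Sum>k=1..K. pc_cl s K k z) = real K * (real K - 1) / 2"
proof -
  define T where "T = (\<Sum>k=1..K. \<Sum>j=1..K. s (z j - z k))"
  have s0: "s 0 = 1 / 2" using s_sym[of 0] by simp
  have s_antisym: "s (a - b) + s (b - a) = 1" for a b using s_sym[of "a - b"] by simp
  \<comment> \<open>Swapping the summation order pairs s (z j - z k) with s (z k - z j).\<close>
  have "2 * T = (\<Sum>k=1..K. \<Sum>j=1..K. s (z j - z k)) + (\<Sum>k=1..K. \<Sum>j=1..K. s (z k - z j))"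
    unfolding T_def by (subst (2) sum.swap) simp
  also have "\<dots> = (\<Sum>k=1..K. \<Sum>j=1..K. s (z j - z k) + s (z k - z j))"
    by (simp add: sum.distrib)
  also have "\<dots> = real K * real K" using s_antisym by simp
  finally have T: "T = real K * real K / 2" by simp
  have "(\<Sum>k=1..K. pc_cl s K k z) = (\<Sum>k=1..K. (\<Sum>j=1..K. s (z j - z k)) - s 0)"
  proof (rule sum.cong)
    fix k assume "k \<in> {1..K}"
    then show "pc_cl s K k z = (\<Sum>j=1..K. s (z j - z k)) - s 0"
      unfolding pc_cl_def by (simp only: sum_atLeastAtMost_remove diff_self)
  qed simp
  also have "\<dots> = T - real K / 2" unfolding T_def by (simp add: sum_subtractf s0)
  also have "\<dots> = real K * (real K - 1) / 2" using T by (simp add: field_simps)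
  finally show ?thesis .
qed

lemma complementary_loss_constants:
  assumes K: "K \<ge> 2" and s_sym: "\<And>z. s z + s (- z) = 1"
    and losses: "(l = ova_loss s K \<and> lc = ova_cl s K) \<or> (l = pc_loss s K \<and> lc = pc_cl s K)"
  obtains M1 M2 :: real where "M1 \<ge> 0" "M2 \<ge> 0"
    "\<And>z. (\<Sum>k=1..K. lc k z) = M1" "\<And>k z. k \<in> {1..K} \<Longrightarrow> lc k z + l k z = M2"
proof -
  have "real K \<ge> 2" using K by simp
  from losses show thesis
  proof
    assume "l = ova_loss s K \<and> lc = ova_cl s K"
    then show thesis
      using that[of "real K" 2] ova_cl_add_ova_loss[of K s] sum_ova_cl[of K s] K s_sym by simp
  next
    assume "l = pc_loss s K \<and> lc = pc_cl s K"
    then show thesis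
      using that[of "real K * (real K - 1) / 2" "real K - 1"] \<open>real K \<ge> 2\<close>
        pc_cl_add_pc_loss[of s] sum_pc_cl[of s] s_sym by simp
  qed
qed

lemma losses_nonneg:
  assumes K: "K \<ge> 2" and s_nonneg: "\<And>z. s z \<ge> 0"
    and losses: "(l = ova_loss s K \<and> lc = ova_cl s K) \<or> (l = pc_loss s K \<and> lc = pc_cl s K)"
  shows "l k z \<ge> 0" and "lc k z \<ge> 0"
  using losses K unfolding ova_loss_def ova_cl_def pc_loss_def pc_cl_def
  by (auto intro!: add_nonneg_nonneg mult_nonneg_nonneg divide_nonneg_nonneg sum_nonneg s_nonneg)

lemma measurable_complementary_loss:
  assumes [measurable]: "s \<in> borel_measurable borel" "\<And>k. (\<lambda>x. g x k) \<in> borel_measurable M"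
    and losses: "lc = ova_cl s K \<or> lc = pc_cl s K"
  shows "(\<lambda>x. lc k (g x)) \<in> borel_measurable M"
  using losses unfolding ova_cl_def pc_cl_def by auto

lemma comp_loss_affine:
  assumes sum_lc: "(\<Sum>j=1..K. lc j z) = M1"
    and pair: "\<And>j. j \<in> {1..K} \<Longrightarrow> lc j z + l j z = M2"
    and k: "k \<in> {1..K}"
  shows "comp_loss l K k z = (real K - 1) * lc k z - M1 + M2"
proof -
  have "(\<Sum>j=1..K. l j z) = (\<Sum>j=1..K. M2 - lc j z)"
    using pair by (intro sum.cong) (auto simp: algebra_simps)
  also have "\<dots> = real K * M2 - M1" using sum_lc by (simp add: sum_subtractf)
  finally have sum_l: "(\<Sum>j=1..K. l j z) = real K * M2 - M1" .
  have l_k: "l k z = M2 - lc k z" using pair[OF k] by linarith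
  show ?thesis unfolding comp_loss_def sum_l l_k by (simp add: algebra_simps)
qed

lemma sum_trans_T_column:
  assumes K: "K \<ge> 2" and j: "j \<in> {1..K}"
  shows "(\<Sum>k=1..K. trans_T K k j) = 1"
proof -
  have "(\<Sum>k=1..K. trans_T K k j) = trans_T K j j + (\<Sum>k\<in>{1..K} - {j}. 1 / (real K - 1))"
    using j by (subst sum.remove[of _ j]) (auto simp: trans_T_def intro!: sum.cong)
  also have "\<dots> = 1" using j K by (simp add: trans_T_def of_nat_diff)
  finally show ?thesis .
qed

lemma sum_trans_T_mult:
  assumes K: "K \<ge> 2"
  shows "(\<Sum>k=1..K. \<Sum>j=1..K. trans_T K k j * p j) = (\<Sum>j=1..K. p j)"
  using sum_trans_T_column[OF K]
  by (subst sum.swap) (simp flip: sum_distrib_right)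

lemma abs_convex_sum_le:
  fixes w f :: "'a \<Rightarrow> real"
  assumes "\<And>k. k \<in> A \<Longrightarrow> w k \<ge> 0" and "sum w A = 1" and "\<And>k. k \<in> A \<Longrightarrow> \<bar>f k\<bar> \<le> B"
  shows "\<bar>\<Sum>k\<in>A. w k * f k\<bar> \<le> B"
proof -
  have "\<bar>\<Sum>k\<in>A. w k * f k\<bar> \<le> (\<Sum>k\<in>A. w k * B)"
    using assms(1,3) by (intro order.trans[OF sum_abs] sum_mono) (simp add: abs_mult mult_left_mono)
  also have "\<dots> = B" using assms(2) by (simp flip: sum_distrib_right)
  finally show ?thesis .
qed

lemma integrable_convex_combination:
  fixes eta f :: "'x \<Rightarrow> nat \<Rightarrow> real"
  assumes "prob_space \<mu>" and meas: "(\<lambda>x. \<Sum>k=1..K. eta x k * f x k) \<in> borel_measurable \<mu>"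
    and eta_nonneg: "\<And>x k. k \<in> {1..K} \<Longrightarrow> eta x k \<ge> 0"
    and eta_sum: "\<And>x. (\<Sum>k=1..K. eta x k) = 1"
    and f_bound: "\<And>x k. k \<in> {1..K} \<Longrightarrow> \<bar>f x k\<bar> \<le> B"
  shows "integrable \<mu> (\<lambda>x. \<Sum>k=1..K. eta x k * f x k)"
proof -
  interpret prob_space \<mu> by fact
  have "\<bar>\<Sum>k=1..K. eta x k * f x k\<bar> \<le> B" for x
    by (rule abs_convex_sum_le) (use eta_nonneg eta_sum f_bound in auto)
  then show ?thesis
    using meas by (intro integrable_const_bound[where B = B] AE_I2) simp_all
qed

lemma joint_exp_affine:
  assumes "prob_space \<mu>" and eta_sum: "\<And>x. (\<Sum>k=1..K. eta x k) = 1"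
    and int: "integrable \<mu> (\<lambda>x. \<Sum>k=1..K. eta x k * f x k)"
    and h: "\<And>x k. k \<in> {1..K} \<Longrightarrow> h x k = a * f x k + b"
  shows "joint_exp \<mu> eta K h = a * joint_exp \<mu> eta K f + b"
proof -
  interpret prob_space \<mu> by fact
  have pointwise: "(\<Sum>k=1..K. eta x k * h x k) = a * (\<Sum>k=1..K. eta x k * f x k) + b" for x
  proof -
    have "(\<Sum>k=1..K. eta x k * h x k) = (\<Sum>k=1..K. a * (eta x k * f x k) + b * eta x k)"
      by (intro sum.cong) (simp_all add: h algebra_simps)
    also have "\<dots> = a * (\<Sum>k=1..K. eta x k * f x k) + b"
      using eta_sum[of x] by (simp add: sum.distrib flip: sum_distrib_left)
    finally show ?thesis .
  qed
  show ?thesis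
    unfolding joint_exp_def pointwise using int by (simp add: prob_space)
qed

theorem corollary2:
  fixes K :: nat and \<mu> :: "'x measure" and eta etabar :: "'x \<Rightarrow> nat \<Rightarrow> real"
    and g :: "'x \<Rightarrow> nat \<Rightarrow> real" and s :: "real \<Rightarrow> real"
    and l lc :: "nat \<Rightarrow> (nat \<Rightarrow> real) \<Rightarrow> real"
  assumes K: "K \<ge> 2"
    and prob: "prob_space \<mu>"
    and eta_meas: "\<And>k. (\<lambda>x. eta x k) \<in> borel_measurable \<mu>"
    and eta_nonneg: "\<And>x k. k \<in> {1..K} \<Longrightarrow> eta x k \<ge> 0"
    and eta_sum: "\<And>x. (\<Sum>k=1..K. eta x k) = 1"
    and etabar_def: "\<And>x k. k \<in> {1..K} \<Longrightarrow> etabar x k = (\<Sum>j=1..K. trans_T K k j * eta x j)"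
    and g_meas: "\<And>k. (\<lambda>x. g x k) \<in> borel_measurable \<mu>"
    and s_meas: "s \<in> borel_measurable borel"
    and s_nonneg: "\<And>z. s z \<ge> 0"
    and s_sym: "\<And>z. s z + s (- z) = 1"
    and losses: "(l = ova_loss s K \<and> lc = ova_cl s K) \<or> (l = pc_loss s K \<and> lc = pc_cl s K)"
  shows "\<exists>M1 M2. M1 \<ge> 0 \<and> M2 \<ge> 0
    \<and> (\<forall>x. (\<Sum>yb=1..K. lc yb (g x)) = M1)
    \<and> (\<forall>x. \<forall>yb\<in>{1..K}. lc yb (g x) + l yb (g x) = M2)
    \<and> joint_exp \<mu> etabar K (\<lambda>x k. comp_loss l K k (g x))
        = (real K - 1) * joint_exp \<mu> etabar K (\<lambda>x k. lc k (g x)) - M1 + M2"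
proof -
  obtain M1 M2 where M: "M1 \<ge> 0" "M2 \<ge> 0" "\<And>z. (\<Sum>k=1..K. lc k z) = M1"
    "\<And>k z. k \<in> {1..K} \<Longrightarrow> lc k z + l k z = M2"
    using complementary_loss_constants[OF K s_sym losses] by blast
  have etabar_sum: "(\<Sum>k=1..K. etabar x k) = 1" for x
    using eta_sum sum_trans_T_mult[OF K] by (simp add: etabar_def)
  have etabar_nonneg: "etabar x k \<ge> 0" if "k \<in> {1..K}" for x k
    using that eta_nonneg by (auto simp: etabar_def trans_T_def intro!: sum_nonneg)
  have lc_bound: "\<bar>lc k z\<bar> \<le> M2" if "k \<in> {1..K}" for k z
    using M(4)[OF that, of z] losses_nonneg[OF K s_nonneg losses, of k z] by linarith
  have [measurable]: "(\<lambda>x. lc k (g x)) \<in> borel_measurable \<mu>" for k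
    using losses by (intro measurable_complementary_loss[OF s_meas g_meas]) auto
  have "(\<Sum>k=1..K. etabar x k * lc k (g x))
      = (\<Sum>k=1..K. (\<Sum>j=1..K. trans_T K k j * eta x j) * lc k (g x))" for x
    by (intro sum.cong) (simp_all add: etabar_def)
  then have "(\<lambda>x. \<Sum>k=1..K. etabar x k * lc k (g x)) \<in> borel_measurable \<mu>"
    using eta_meas by simp
  then have "integrable \<mu> (\<lambda>x. \<Sum>k=1..K. etabar x k * lc k (g x))"
    by (rule integrable_convex_combination[OF prob _ etabar_nonneg etabar_sum lc_bound])
  moreover have "comp_loss l K k (g x) = (real K - 1) * lc k (g x) + (M2 - M1)"
    if "k \<in> {1..K}" for x k
    using comp_loss_affine[where lc = lc and l = l, OF M(3) M(4) that] by simp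
  ultimately have "joint_exp \<mu> etabar K (\<lambda>x k. comp_loss l K k (g x))
        = (real K - 1) * joint_exp \<mu> etabar K (\<lambda>x k. lc k (g x)) + (M2 - M1)"
    by (rule joint_exp_affine[OF prob etabar_sum])
  then show ?thesis using M by auto
qed

end
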